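(* For every positive integer $k$, any randomized distributed algorithm in the LOCAL model that, for every assignment of unique identifiers, finds a proper $3$-coloring of $G_k$ with success probability greater than $1/2$ requires at least $k$ rounds.
   Context: The outerplanar graphs $G_k$ are defined inductively. $G_0$ has vertex set $\{v_0,u_0\}$ and the single edge $\{v_0,u_0\}$. For $i\ge 1$, $G_i$ is obtained from $G_{i-1}$ by adding six new vertices $a_i,b_i,c_i,d_i,v_i,u_i$ and the edges $\{a_i,b_i\},\{c_i,d_i\},\{a_i,v_i\},\{b_i,v_i\},\{c_i,u_i\},\{d_i,u_i\},\{a_i,v_{i-1}\},\{b_i,v_{i-1}\},\{c_i,u_{i-1}\},\{d_i,u_{i-1}\}$. LOCAL model: the network is the graph, each vertex has a unique identifier, and in synchronous rounds each vertex receives the previous round's messages, computes arbitrarily (possibly using random bits) and sends messages of unbounded size to its neighbors; at the end each vertex outputs its color. A proper $3$-coloring assigns colors in $\{1,2,3\}$ with adjacent vertices colored differently. *)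

theory Defs
  imports "HOL-Probability.Probability"
begin

text \<open>Vertices of the graphs G_k. GV i and GU i are v_i and u_i (i >= 0);
  GA i, GB i, GC i, GD i are a_i, b_i, c_i, d_i (i >= 1).\<close>
datatype gvert = GA nat | GB nat | GC nat | GD nat | GV nat | GU nat

definition gverts :: "nat \<Rightarrow> gvert set" where
  "gverts k = {GV 0, GU 0} \<union>
     (\<Union>i\<in>{1..k}. {GA i, GB i, GC i, GD i, GV i, GU i})"

definition layer_edges :: "nat \<Rightarrow> gvert set set" where
  "layer_edges i = {{GA i, GB i}, {GC i, GD i}, {GA i, GV i}, {GB i, GV i},
     {GC i, GU i}, {GD i, GU i}, {GA i, GV (i - 1)}, {GB i, GV (i - 1)},
     {GC i, GU (i - 1)}, {GD i, GU (i - 1)}}"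

definition gedges :: "nat \<Rightarrow> gvert set set" where
  "gedges k = {{GV 0, GU 0}} \<union> (\<Union>i\<in>{1..k}. layer_edges i)"

definition gadj :: "nat \<Rightarrow> gvert \<Rightarrow> gvert \<Rightarrow> bool" where
  "gadj k x y \<longleftrightarrow> {x, y} \<in> gedges k"

definition proper3 :: "nat \<Rightarrow> (gvert \<Rightarrow> nat) \<Rightarrow> bool" where
  "proper3 k c \<longleftrightarrow> (\<forall>v\<in>gverts k. c v \<in> {1, 2, 3}) \<and>
                     (\<forall>u v. gadj k u v \<longrightarrow> c u \<noteq> c v)"

text \<open>A vertex starts in state
  init (its identifier) (its private infinite sequence of random bits).
  In each round, every vertex u sends to each neighbour w the message
  msg (state of u) (identifier of w); every vertex w then updates its state by
  step (old state) (set of pairs (sender identifier, message received)).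
  ident is the identifier assignment, \<omega> the random bits of all vertices.\<close>
fun lstate :: "nat \<Rightarrow> (nat \<Rightarrow> (nat \<Rightarrow> bool) \<Rightarrow> 's) \<Rightarrow> ('s \<Rightarrow> (nat \<times> 'm) set \<Rightarrow> 's)
    \<Rightarrow> ('s \<Rightarrow> nat \<Rightarrow> 'm) \<Rightarrow> (gvert \<Rightarrow> nat) \<Rightarrow> (gvert \<Rightarrow> nat \<Rightarrow> bool) \<Rightarrow> nat \<Rightarrow> gvert \<Rightarrow> 's"
where
  "lstate k init step msg ident \<omega> 0 v = init (ident v) (\<omega> v)"
| "lstate k init step msg ident \<omega> (Suc t) v =
     step (lstate k init step msg ident \<omega> t v)
       {(ident u, msg (lstate k init step msg ident \<omega> t u) (ident v)) | u. gadj k u v}"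

definition coins :: "(nat \<Rightarrow> bool) measure" where
  "coins = PiM UNIV (\<lambda>_::nat. measure_pmf (bernoulli_pmf (1/2)))"

definition rand_space :: "nat \<Rightarrow> (gvert \<Rightarrow> nat \<Rightarrow> bool) measure" where
  "rand_space k = PiM (gverts k) (\<lambda>_. coins)"

definition success_prob :: "nat \<Rightarrow> (nat \<Rightarrow> (nat \<Rightarrow> bool) \<Rightarrow> 's) \<Rightarrow> ('s \<Rightarrow> (nat \<times> 'm) set \<Rightarrow> 's)
    \<Rightarrow> ('s \<Rightarrow> nat \<Rightarrow> 'm) \<Rightarrow> ('s \<Rightarrow> nat) \<Rightarrow> (gvert \<Rightarrow> nat) \<Rightarrow> nat \<Rightarrow> real" where
  "success_prob k init step msg out ident t =
     measure (rand_space k)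
       {\<omega> \<in> space (rand_space k).
          proper3 k (\<lambda>v. out (lstate k init step msg ident \<omega> t v))}"

end

theory Submission
  imports Defs
begin

(* In a proper 3-colouring of G_k the two triangles of layer i share the edge {a_i, b_i},
   which forces v_i and v_(i-1) to get the same colour, and likewise u_i and u_(i-1);
   hence v_k and u_k inherit the distinct colours of v_0 and u_0.
   If t < k, exchange the identifiers and random bits of the two sides above level t.
   After t rounds v_k then knows exactly what u_k knew before, while v_0 is not affected,
   so a run and its exchanged run cannot both succeed. As the exchange preserves the
   product measure of the random bits, the success probabilities of the two identifier
   assignments add up to at most 1. *)

fun level :: "gvert \<Rightarrow> int" where
  "level (GV i) = 2 * int i"
| "level (GU i) = 2 * int i"
| "level (GA i) = 2 * int i - 1"
| "level (GB i) = 2 * int i - 1"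
| "level (GC i) = 2 * int i - 1"
| "level (GD i) = 2 * int i - 1"

lemma gadj_level_diff: "gadj k u v \<Longrightarrow> \<bar>level u - level v\<bar> \<le> 1"
  unfolding gadj_def gedges_def layer_edges_def by (auto simp: doubleton_eq_iff)

lemma lstate_cong_level:
  assumes "\<And>y. \<bar>level y - level x\<bar> \<le> int s \<Longrightarrow> ident y = ident' y \<and> \<omega> y = \<omega>' y"
  shows "lstate k init step msg ident \<omega> s x = lstate k init step msg ident' \<omega>' s x"
  using assms
proof (induction s arbitrary: x)
  case 0
  then show ?case by simp
next
  case (Suc s)
  have neighbours: "ident u = ident' u \<and>
      lstate k init step msg ident \<omega> s u = lstate k init step msg ident' \<omega>' s u"
    if "gadj k u x" for u
    using Suc.prems gadj_level_diff[OF that] by (auto intro: Suc.IH)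
  have "lstate k init step msg ident \<omega> s x = lstate k init step msg ident' \<omega>' s x"
    using Suc.prems by (intro Suc.IH) auto
  moreover have "ident x = ident' x"
    using Suc.prems by auto
  moreover have "{(ident u, msg (lstate k init step msg ident \<omega> s u) (ident x)) | u. gadj k u x}
      = {(ident' u, msg (lstate k init step msg ident' \<omega>' s u) (ident x)) | u. gadj k u x}"
    using neighbours by (intro Collect_cong ex_cong1) auto
  ultimately show ?case by simp
qed

lemma lstate_comp_automorphism:
  assumes "bij f" and "\<And>u v. gadj k (f u) (f v) \<longleftrightarrow> gadj k u v"
  shows "lstate k init step msg (ident \<circ> f) (\<omega> \<circ> f) s x = lstate k init step msg ident \<omega> s (f x)"
proof (induction s arbitrary: x)
  case 0
  then show ?case by simp
next
  case (Suc s)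
  have "{(ident (f u), msg (lstate k init step msg ident \<omega> s (f u)) (ident (f x))) | u. gadj k (f u) (f x)}
      = {(ident u, msg (lstate k init step msg ident \<omega> s u) (ident (f x))) | u. gadj k u (f x)}"
  proof -
    have "\<exists>u'. u = f u'" for u
      using \<open>bij f\<close> by (metis bij_pointE)
    then show ?thesis
      by auto metis
  qed
  with Suc.IH assms(2) show ?case by simp
qed

lemma gadj_sym: "gadj k u v \<Longrightarrow> gadj k v u"
  by (simp add: gadj_def insert_commute)

lemma gadj_gverts: "gadj k u v \<Longrightarrow> u \<in> gverts k"
  unfolding gadj_def gedges_def layer_edges_def gverts_def
  by (auto simp: doubleton_eq_iff)

lemma layer_edge_gadj: "1 \<le> i \<Longrightarrow> i \<le> k \<Longrightarrow> {u, v} \<in> layer_edges i \<Longrightarrow> gadj k u v"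
  by (auto simp: gadj_def gedges_def)

lemma proper3_diamond:
  assumes "proper3 k c" "gadj k a b" "gadj k a p" "gadj k b p" "gadj k a q" "gadj k b q"
  shows "c p = c q"
proof -
  have "a \<in> gverts k" "b \<in> gverts k" "p \<in> gverts k" "q \<in> gverts k"
    using gadj_gverts assms(2,4) gadj_gverts[OF gadj_sym] assms(3,5) by blast+
  then have "c a \<in> {1, 2, 3}" "c b \<in> {1, 2, 3}" "c p \<in> {1, 2, 3}" "c q \<in> {1, 2, 3}"
    using assms(1) unfolding proper3_def by blast+
  moreover have "c a \<noteq> c b" "c a \<noteq> c p" "c b \<noteq> c p" "c a \<noteq> c q" "c b \<noteq> c q"
    using assms unfolding proper3_def by blast+
  ultimately show ?thesis by auto
qed

lemma proper3_GV_eq_GV0: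
  assumes "proper3 k c" shows "i \<le> k \<Longrightarrow> c (GV i) = c (GV 0)"
proof (induction i)
  case 0
  then show ?case by simp
next
  case (Suc i)
  have "gadj k (GA (Suc i)) (GB (Suc i))" "gadj k (GA (Suc i)) (GV (Suc i))"
    "gadj k (GB (Suc i)) (GV (Suc i))" "gadj k (GA (Suc i)) (GV i)" "gadj k (GB (Suc i)) (GV i)"
    using Suc.prems by (auto intro!: layer_edge_gadj[of "Suc i"] simp: layer_edges_def)
  then have "c (GV (Suc i)) = c (GV i)"
    by (rule proper3_diamond[OF assms])
  with Suc show ?case by simp
qed

fun side_swap :: "gvert \<Rightarrow> gvert" where
  "side_swap (GV i) = GU i"
| "side_swap (GU i) = GV i"
| "side_swap (GA i) = GC i"
| "side_swap (GB i) = GD i"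
| "side_swap (GC i) = GA i"
| "side_swap (GD i) = GB i"

lemma side_swap_layer_edge: "e \<in> layer_edges i \<Longrightarrow> side_swap ` e \<in> layer_edges i"
  unfolding layer_edges_def by (elim insertE emptyE) (simp_all add: doubleton_eq_iff)

lemma side_swap_gedge: "e \<in> gedges k \<Longrightarrow> side_swap ` e \<in> gedges k"
  unfolding gedges_def using side_swap_layer_edge by (auto simp: doubleton_eq_iff)

lemma side_swap_side_swap [simp]: "side_swap (side_swap x) = x"
  by (cases x) auto

lemma level_side_swap [simp]: "level (side_swap x) = level x"
  by (cases x) auto

lemma side_swap_in_gverts_iff [simp]: "side_swap x \<in> gverts k \<longleftrightarrow> x \<in> gverts k"
  unfolding gverts_def by (cases x) auto

lemma gadj_side_swap_iff [simp]: "gadj k (side_swap u) (side_swap v) \<longleftrightarrow> gadj k u v"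
  using side_swap_gedge[of "{u, v}" k] side_swap_gedge[of "{side_swap u, side_swap v}" k]
  by (auto simp: gadj_def)

lemma proper3_comp_side_swap: "proper3 k c \<Longrightarrow> proper3 k (c \<circ> side_swap)"
  unfolding proper3_def by simp

lemma bij_side_swap: "bij side_swap"
  by (rule o_bij[of side_swap]) (simp_all add: fun_eq_iff)

lemma proper3_GU_neq_GV0:
  assumes "proper3 k c" "i \<le> k"
  shows "c (GU i) \<noteq> c (GV 0)"
proof -
  have "gadj k (GV 0) (GU 0)"
    by (simp add: gadj_def gedges_def)
  then have "c (GV 0) \<noteq> c (GU 0)"
    using assms(1) unfolding proper3_def by blast
  moreover have "c (GU i) = c (GU 0)"
    using proper3_GV_eq_GV0[OF proper3_comp_side_swap[OF assms(1)] assms(2)] by simp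
  ultimately show ?thesis
    by simp
qed

definition swap_above :: "nat \<Rightarrow> gvert \<Rightarrow> gvert" where
  "swap_above t x = (if int t < level x then side_swap x else x)"

lemma swap_above_swap_above [simp]: "swap_above t (swap_above t x) = x"
  by (simp add: swap_above_def)

lemma bij_swap_above: "bij (swap_above t)"
  by (rule o_bij[of "swap_above t"]) (simp_all add: fun_eq_iff)

lemma swap_above_in_gverts_iff [simp]: "swap_above t x \<in> gverts k \<longleftrightarrow> x \<in> gverts k"
  by (simp add: swap_above_def)

lemma swap_above_view_conflict:
  assumes "t < k"
    and "proper3 k (\<lambda>v. out (lstate k init step msg ident \<omega> t v))"
  shows "\<not> proper3 k (\<lambda>v. out (lstate k init step msg
           (ident \<circ> swap_above t) (\<omega> \<circ> swap_above t) t v))"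
proof
  assume swapped_proper: "proper3 k (\<lambda>v. out (lstate k init step msg
           (ident \<circ> swap_above t) (\<omega> \<circ> swap_above t) t v))"
  have top: "lstate k init step msg (ident \<circ> swap_above t) (\<omega> \<circ> swap_above t) t (GV k)
      = lstate k init step msg ident \<omega> t (GU k)"
  proof -
    have "lstate k init step msg (ident \<circ> swap_above t) (\<omega> \<circ> swap_above t) t (GV k)
        = lstate k init step msg (ident \<circ> side_swap) (\<omega> \<circ> side_swap) t (GV k)"
      by (rule lstate_cong_level) (use \<open>t < k\<close> in \<open>auto simp: swap_above_def\<close>)
    also have "\<dots> = lstate k init step msg ident \<omega> t (GU k)"
      by (simp add: lstate_comp_automorphism bij_side_swap)
    finally show ?thesis .
  qed
  have bottom: "lstate k init step msg (ident \<circ> swap_above t) (\<omega> \<circ> swap_above t) t (GV 0)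
      = lstate k init step msg ident \<omega> t (GV 0)"
    by (rule lstate_cong_level) (auto simp: swap_above_def)
  have "out (lstate k init step msg ident \<omega> t (GU k)) = out (lstate k init step msg ident \<omega> t (GV 0))"
    using proper3_GV_eq_GV0[OF swapped_proper order_refl] top bottom by simp
  with proper3_GU_neq_GV0[OF assms(2) order_refl] show False
    by simp
qed

lemma prob_space_coins: "prob_space coins"
  unfolding coins_def by (intro prob_space_PiM prob_space_measure_pmf)

lemma prob_space_rand_space: "prob_space (rand_space k)"
  unfolding rand_space_def by (intro prob_space_PiM prob_space_coins)

lemma rand_space_comp_perm:
  assumes "bij f" and f_gverts: "\<And>x. f x \<in> gverts k \<longleftrightarrow> x \<in> gverts k"
  shows "(\<lambda>\<omega>. \<omega> \<circ> f) \<in> rand_space k \<rightarrow>\<^sub>M rand_space k"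
    and "distr (rand_space k) (rand_space k) (\<lambda>\<omega>. \<omega> \<circ> f) = rand_space k"
proof -
  let ?M = "rand_space k"
  let ?reindex = "\<lambda>\<omega>. \<lambda>x\<in>gverts k. \<omega> (f x)"
  have reindex_eq: "\<omega> \<circ> f = ?reindex \<omega>" if "\<omega> \<in> space ?M" for \<omega>
    using that f_gverts by (auto simp: rand_space_def space_PiM PiE_def extensional_def)
  have "?reindex \<in> ?M \<rightarrow>\<^sub>M ?M"
    unfolding rand_space_def using f_gverts by (intro measurable_restrict) simp
  then show "(\<lambda>\<omega>. \<omega> \<circ> f) \<in> ?M \<rightarrow>\<^sub>M ?M"
    by (subst measurable_cong[OF reindex_eq])
  have "distr ?M ?M ?reindex = ?M"
    using distr_PiM_reindex[of "gverts k" "\<lambda>_. coins" f "gverts k", OF prob_space_coins]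
      inj_on_subset[OF bij_is_inj[OF \<open>bij f\<close>]] f_gverts
    unfolding rand_space_def by (simp add: Pi_iff)
  then show "distr ?M ?M (\<lambda>\<omega>. \<omega> \<circ> f) = ?M"
    by (subst distr_cong[OF refl refl reindex_eq])
qed

lemma success_prob_swap_above_le:
  assumes "t < k"
  shows "success_prob k init step msg out ident t
       + success_prob k init step msg out (ident \<circ> swap_above t) t \<le> 1"
proof -
  let ?M = "rand_space k"
  define good where "good ident' = {\<omega> \<in> space ?M.
      proper3 k (\<lambda>v. out (lstate k init step msg ident' \<omega> t v))}" for ident'
  define swapped_good where
    "swapped_good = (\<lambda>\<omega>. \<omega> \<circ> swap_above t) -` good (ident \<circ> swap_above t) \<inter> space ?M"
  interpret prob_space ?M
    by (rule prob_space_rand_space)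
  note swap = rand_space_comp_perm[OF bij_swap_above swap_above_in_gverts_iff]
  have disjoint: "good ident \<inter> swapped_good = {}"
    using swap_above_view_conflict[OF assms, where init = init and step = step and msg = msg
        and out = out and ident = ident]
    by (auto simp: good_def swapped_good_def)
  \<comment> \<open>The events need not be measurable (init is arbitrary); if one is not, its measure is 0.\<close>
  show ?thesis
  proof (cases "good ident \<in> sets ?M \<and> good (ident \<circ> swap_above t) \<in> sets ?M")
    case True
    then have "swapped_good \<in> sets ?M"
      unfolding swapped_good_def using swap(1) by (auto intro: measurable_sets)
    moreover have "prob swapped_good = prob (good (ident \<circ> swap_above t))"
      using measure_distr[OF swap(1), of "good (ident \<circ> swap_above t)"] True swap(2)
      by (simp add: swapped_good_def)
    ultimately have "prob (good ident) + prob (good (ident \<circ> swap_above t))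
        = prob (good ident \<union> swapped_good)"
      using finite_measure_Union[of "good ident" swapped_good] True disjoint by simp
    also have "\<dots> \<le> 1"
      by (rule prob_le_1)
    finally show ?thesis
      by (simp add: success_prob_def good_def)
  next
    case False
    then have "prob (good ident) = 0 \<or> prob (good (ident \<circ> swap_above t)) = 0"
      by (auto intro: measure_notin_sets)
    with prob_le_1 show ?thesis
      by (auto simp: success_prob_def good_def)
  qed
qed

theorem lemma6p10:
  fixes init :: "nat \<Rightarrow> (nat \<Rightarrow> bool) \<Rightarrow> 's"
    and step :: "'s \<Rightarrow> (nat \<times> 'm) set \<Rightarrow> 's"
    and msg :: "'s \<Rightarrow> nat \<Rightarrow> 'm"
    and out :: "'s \<Rightarrow> nat"
    and k t :: nat
  assumes "1 \<le> k"
    and "\<forall>ident :: gvert \<Rightarrow> nat. inj_on ident (gverts k) \<longrightarrow>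
           success_prob k init step msg out ident t > 1/2"
  shows "k \<le> t"
proof (rule ccontr)
  assume "\<not> k \<le> t"
  then have "t < k" by simp
  have "finite (gverts k)"
    by (simp add: gverts_def)
  then obtain ident :: "gvert \<Rightarrow> nat" where ident: "inj_on ident (gverts k)"
    using finite_imp_inj_to_nat_seg by blast
  moreover have "inj_on (ident \<circ> swap_above t) (gverts k)"
  proof (rule comp_inj_on)
    show "inj_on (swap_above t) (gverts k)"
      using bij_is_inj[OF bij_swap_above] inj_on_subset by blast
    show "inj_on ident (swap_above t ` gverts k)"
      using ident by (rule inj_on_subset) auto
  qed
  ultimately have "success_prob k init step msg out ident t > 1/2"
    and "success_prob k init step msg out (ident \<circ> swap_above t) t > 1/2"
    using assms(2) by blast+
  with success_prob_swap_above_le[OF \<open>t < k\<close>, where init = init and step = step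
      and msg = msg and out = out and ident = ident]
  show False by linarith
qed

end
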